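(* The integral subgroup $U$ equals its subgroup $U^1$.
   Context: For $f\in\mathbb{Q}[t,t^{-1}]$ let $\overline{f}(t)=f(t^{-1})$, and $\Phi=1+t^{-1}+t$. $\mathrm{PGL}(2,\mathbb{Q}[t,t^{-1}])$ is $\mathrm{GL}(2,\mathbb{Q}[t,t^{-1}])$ modulo unit scalar matrices, and $\mathrm{PGL}(2,\mathbb{Z}[t,t^{-1}])$ is the image of $\mathrm{GL}(2,\mathbb{Z}[t,t^{-1}])$ in it. The quaternionic group $\mathcal{Q}$ is the set of elements of $\mathrm{PGL}(2,\mathbb{Q}[t,t^{-1}])$ having a representative $\begin{pmatrix}g_1&g_2\\-\Phi\overline{g_2}&\overline{g_1}\end{pmatrix}$ with $g_1,g_2\in\mathbb{Q}[t,t^{-1}]$; the integral subgroup is $U=\mathcal{Q}\cap\mathrm{PGL}(2,\mathbb{Z}[t,t^{-1}])$, and $U^1$ is the subgroup of elements of $U$ having a representative $B$ with $\det B=1$. *)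

theory Defs
  imports "HOL-Computational_Algebra.Formal_Laurent_Series"
begin

text \<open>Laurent polynomials Q[t,t^-1] are modelled as the formal Laurent series over rat
  with finite support; t is fls_X and t^-1 is fls_X_inv.\<close>

definition LQ :: "rat fls set" where
  "LQ = {f. finite {n. fls_nth f (n) \<noteq> 0}}"

definition LZ :: "rat fls set" where
  "LZ = {f \<in> LQ. \<forall>n. fls_nth f (n) \<in> \<int>}"

definition lbar :: "rat fls \<Rightarrow> rat fls" where
  "lbar f = Abs_fls (\<lambda>n. if finite {k. fls_nth f (k) \<noteq> 0} then fls_nth f ((- n)) else 0)"

definition Phi :: "rat fls" where
  "Phi = 1 + fls_X_inv + fls_X"

definition unit_in :: "rat fls set \<Rightarrow> rat fls \<Rightarrow> bool" where
  "unit_in R u \<longleftrightarrow> u \<in> R \<and> (\<exists>v\<in>R. u * v = 1)"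

text \<open>2x2 matrices: M2 a b c d is the matrix ((a,b),(c,d)).\<close>
datatype 'a mat2 = M2 'a 'a 'a 'a

fun det2 :: "'a::comm_ring mat2 \<Rightarrow> 'a" where
  "det2 (M2 a b c d) = a * d - b * c"

fun smult2 :: "'a::times \<Rightarrow> 'a mat2 \<Rightarrow> 'a mat2" where
  "smult2 u (M2 a b c d) = M2 (u * a) (u * b) (u * c) (u * d)"

fun entries_in :: "'a set \<Rightarrow> 'a mat2 \<Rightarrow> bool" where
  "entries_in R (M2 a b c d) \<longleftrightarrow> a \<in> R \<and> b \<in> R \<and> c \<in> R \<and> d \<in> R"

definition GL2 :: "rat fls set \<Rightarrow> rat fls mat2 set" where
  "GL2 R = {A. entries_in R A \<and> unit_in R (det2 A)}"

text \<open>Two elements of GL(2,Q[t,t^-1]) represent the same element of PGL(2,Q[t,t^-1])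
  iff they differ by a unit scalar.\<close>
definition proj_eq :: "rat fls mat2 \<Rightarrow> rat fls mat2 \<Rightarrow> bool" where
  "proj_eq A B \<longleftrightarrow> (\<exists>u. unit_in LQ u \<and> B = smult2 u A)"

definition quaternionic :: "rat fls mat2 \<Rightarrow> bool" where
  "quaternionic A \<longleftrightarrow> (\<exists>g1\<in>LQ. \<exists>g2\<in>LQ.
      proj_eq A (M2 g1 g2 (- (Phi * lbar g2)) (lbar g1)))"

definition integral_class :: "rat fls mat2 \<Rightarrow> bool" where
  "integral_class A \<longleftrightarrow> (\<exists>B\<in>GL2 LZ. proj_eq A B)"

definition in_U :: "rat fls mat2 \<Rightarrow> bool" where
  "in_U A \<longleftrightarrow> A \<in> GL2 LQ \<and> quaternionic A \<and> integral_class A"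

definition in_U1 :: "rat fls mat2 \<Rightarrow> bool" where
  "in_U1 A \<longleftrightarrow> in_U A \<and> (\<exists>B\<in>GL2 LQ. proj_eq A B \<and> det2 B = 1)"

end

(* The units of Q[t,t^-1] are the monomials c t^k, and those of Z[t,t^-1] are the
   monomials +-t^m.  For A in U, the determinant D = g1 g1bar + Phi g2 g2bar of the
   quaternionic representative and the determinant +-t^m of an integral representative
   differ by the square of a unit, so D = +-s^2 t^n.  Since D is invariant under the
   involution, n = 0; evaluating at t = 1 gives D(1) = g1(1)^2 + 3 g2(1)^2 >= 0, so the
   sign is +.  Dividing the quaternionic representative by s gives a representative of
   determinant 1. *)
theory Submission
  imports Defs
begin

unbundle fps_syntax

definition fls_monom :: "rat \<Rightarrow> int \<Rightarrow> rat fls" where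
  "fls_monom c n = fls_shift (-n) (fls_const c)"

lemma fls_monom_nth [simp]: "fls_monom c n $$ k = (if k = n then c else 0)"
  by (simp add: fls_monom_def)

lemma fls_monom_mult [simp]: "fls_monom c n * fls_monom d m = fls_monom (c * d) (n + m)"
  by (rule fls_eqI) (simp add: fls_monom_def fls_times_both_shifted_simp add.commute)

lemma fls_monom_power2: "fls_monom c n ^ 2 = fls_monom (c ^ 2) (2 * n)"
  by (simp add: power2_eq_square)

lemma fls_monom_1_0: "fls_monom 1 0 = 1"
  by (simp add: fls_monom_def)

lemma fls_monom_eq_0_iff [simp]: "fls_monom c n = 0 \<longleftrightarrow> c = 0"
  by (auto intro: fls_eqI dest: arg_cong[where f = "\<lambda>f. f $$ n"])

lemma fls_monom_eq_iff: "fls_monom c n = fls_monom d m \<longleftrightarrow> c = d \<and> (c = 0 \<or> n = m)"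
proof
  assume eq: "fls_monom c n = fls_monom d m"
  have "c = d"
    using arg_cong[OF eq, of "\<lambda>f. f $$ n"] arg_cong[OF eq, of "\<lambda>f. f $$ m"]
    by (auto split: if_splits)
  moreover have "c = 0 \<or> n = m"
    using arg_cong[OF eq, of "\<lambda>f. f $$ n"] by (auto split: if_splits)
  ultimately show "c = d \<and> (c = 0 \<or> n = m)" ..
next
  assume "c = d \<and> (c = 0 \<or> n = m)"
  then show "fls_monom c n = fls_monom d m"
    by (auto intro: fls_eqI)
qed

lemma fls_monom_LQ: "fls_monom c n \<in> LQ"
  unfolding LQ_def using finite_subset[of "{k. fls_monom c n $$ k \<noteq> 0}" "{n}"] by auto

lemma LQ_0: "0 \<in> LQ"
  by (simp add: LQ_def)

lemma LQ_add: "f \<in> LQ \<Longrightarrow> g \<in> LQ \<Longrightarrow> f + g \<in> LQ"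
  unfolding LQ_def
  by (auto intro: finite_subset[of _ "{n. f $$ n \<noteq> 0} \<union> {n. g $$ n \<noteq> 0}"])

lemma LQ_sum: "finite I \<Longrightarrow> (\<And>i. i \<in> I \<Longrightarrow> h i \<in> LQ) \<Longrightarrow> (\<Sum>i\<in>I. h i) \<in> LQ"
  by (induction I rule: finite_induct) (auto intro: LQ_add LQ_0)

lemma fls_eq_sum_monoms:
  assumes "finite S" "{n. f $$ n \<noteq> 0} \<subseteq> S"
  shows "f = (\<Sum>n\<in>S. fls_monom (f $$ n) n)"
proof (rule fls_eqI)
  fix k
  have "(\<Sum>n\<in>S. fls_monom (f $$ n) n) $$ k = (\<Sum>n\<in>S. if k = n then f $$ n else 0)"
    by (simp add: fls_nth_sum)
  also have "\<dots> = f $$ k"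
    using assms by (auto simp: sum.delta)
  finally show "f $$ k = (\<Sum>n\<in>S. fls_monom (f $$ n) n) $$ k"
    by simp
qed

lemma LQ_mult_eq_sum_monoms:
  assumes "f \<in> LQ" "g \<in> LQ"
  defines "S \<equiv> {n. f $$ n \<noteq> 0}" and "T \<equiv> {n. g $$ n \<noteq> 0}"
  shows "f * g = (\<Sum>n\<in>S. \<Sum>m\<in>T. fls_monom (f $$ n * g $$ m) (n + m))"
proof -
  have "finite S" "finite T"
    using assms by (auto simp: LQ_def)
  then have "f * g = (\<Sum>n\<in>S. fls_monom (f $$ n) n) * (\<Sum>m\<in>T. fls_monom (g $$ m) m)"
    using fls_eq_sum_monoms[of S f] fls_eq_sum_monoms[of T g] by (simp add: S_def T_def)
  then show ?thesis
    by (simp add: sum_product)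
qed

lemma LQ_mult:
  assumes "f \<in> LQ" "g \<in> LQ"
  shows "f * g \<in> LQ"
proof -
  have "finite {n. f $$ n \<noteq> 0}" "finite {n. g $$ n \<noteq> 0}"
    using assms by (simp_all add: LQ_def)
  then show ?thesis
    unfolding LQ_mult_eq_sum_monoms[OF assms] by (intro LQ_sum fls_monom_LQ)
qed

lemma additive_on_LQ_sum:
  fixes \<phi> :: "rat fls \<Rightarrow> 'b::comm_monoid_add"
  assumes add: "\<And>f g. f \<in> LQ \<Longrightarrow> g \<in> LQ \<Longrightarrow> \<phi> (f + g) = \<phi> f + \<phi> g"
    and zero: "\<phi> 0 = 0"
  shows "finite I \<Longrightarrow> (\<And>i. i \<in> I \<Longrightarrow> h i \<in> LQ) \<Longrightarrow> \<phi> (\<Sum>i\<in>I. h i) = (\<Sum>i\<in>I. \<phi> (h i))"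
  by (induction I rule: finite_induct) (simp_all add: zero add LQ_sum)

lemma additive_on_LQ_mult:
  fixes \<phi> :: "rat fls \<Rightarrow> 'b::comm_semiring_1"
  assumes add: "\<And>f g. f \<in> LQ \<Longrightarrow> g \<in> LQ \<Longrightarrow> \<phi> (f + g) = \<phi> f + \<phi> g"
    and zero: "\<phi> 0 = 0"
    and monom: "\<And>c d n m. \<phi> (fls_monom (c * d) (n + m)) = \<phi> (fls_monom c n) * \<phi> (fls_monom d m)"
    and f: "f \<in> LQ" and g: "g \<in> LQ"
  shows "\<phi> (f * g) = \<phi> f * \<phi> g"
proof -
  define S where "S = {n. f $$ n \<noteq> 0}"
  define T where "T = {n. g $$ n \<noteq> 0}"
  have fin: "finite S" "finite T"
    using f g by (auto simp: LQ_def S_def T_def)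
  note \<phi>_sum = additive_on_LQ_sum[OF add zero]
  have \<phi>_f: "\<phi> f = (\<Sum>n\<in>S. \<phi> (fls_monom (f $$ n) n))"
    using arg_cong[OF fls_eq_sum_monoms[OF fin(1), of f], of \<phi>] fin
    by (simp add: S_def \<phi>_sum fls_monom_LQ)
  have \<phi>_g: "\<phi> g = (\<Sum>m\<in>T. \<phi> (fls_monom (g $$ m) m))"
    using arg_cong[OF fls_eq_sum_monoms[OF fin(2), of g], of \<phi>] fin
    by (simp add: T_def \<phi>_sum fls_monom_LQ)
  have "\<phi> (f * g) = (\<Sum>n\<in>S. \<Sum>m\<in>T. \<phi> (fls_monom (f $$ n * g $$ m) (n + m)))"
    using LQ_mult_eq_sum_monoms[OF f g] fin by (simp add: S_def T_def \<phi>_sum LQ_sum fls_monom_LQ)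
  also have "\<dots> = \<phi> f * \<phi> g"
    by (simp add: \<phi>_f \<phi>_g sum_product monom)
  finally show ?thesis .
qed

lemma lbar_nth:
  assumes "f \<in> LQ"
  shows "lbar f $$ n = f $$ (-n)"
proof -
  have fin: "finite {k. f $$ k \<noteq> 0}"
    using assms by (simp add: LQ_def)
  then have "finite (int -` {k. f $$ k \<noteq> 0})"
    by (rule finite_vimageI) (simp add: inj_on_def)
  then have "(\<lambda>n. if finite {k. f $$ k \<noteq> 0} then f $$ (-n) else 0)
      \<in> {g. \<forall>\<^sub>\<infinity> n::nat. g (- int n) = 0}"
    using fin by (simp add: eventually_cofinite vimage_def)
  then show ?thesis
    unfolding lbar_def using fin by (simp add: Abs_fls_inverse)
qed

lemma lbar_support: "f \<in> LQ \<Longrightarrow> {n. lbar f $$ n \<noteq> 0} = uminus ` {n. f $$ n \<noteq> 0}"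
  by (auto simp: lbar_nth image_iff) (metis minus_minus)

lemma lbar_LQ: "f \<in> LQ \<Longrightarrow> lbar f \<in> LQ"
  using lbar_support[of f] by (simp add: LQ_def)

lemma lbar_lbar: "f \<in> LQ \<Longrightarrow> lbar (lbar f) = f"
  by (rule fls_eqI) (simp add: lbar_nth lbar_LQ)

lemma lbar_add: "f \<in> LQ \<Longrightarrow> g \<in> LQ \<Longrightarrow> lbar (f + g) = lbar f + lbar g"
  by (rule fls_eqI) (simp add: lbar_nth LQ_add)

lemma lbar_0: "lbar 0 = 0"
  by (rule fls_eqI) (simp add: lbar_nth LQ_0)

lemma lbar_fls_monom: "lbar (fls_monom c n) = fls_monom c (-n)"
  by (rule fls_eqI) (auto simp: lbar_nth fls_monom_LQ)

lemma lbar_mult: "f \<in> LQ \<Longrightarrow> g \<in> LQ \<Longrightarrow> lbar (f * g) = lbar f * lbar g"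
  by (rule additive_on_LQ_mult[OF lbar_add lbar_0]) (simp_all add: lbar_fls_monom)

lemma lbar_1: "lbar 1 = 1"
  using lbar_fls_monom[of 1 0] by (simp add: fls_monom_1_0)

definition eval_at_1 :: "rat fls \<Rightarrow> rat" where
  "eval_at_1 f = sum (fls_nth f) {n. f $$ n \<noteq> 0}"

lemma eval_at_1_eq_sum:
  "finite S \<Longrightarrow> {n. f $$ n \<noteq> 0} \<subseteq> S \<Longrightarrow> eval_at_1 f = sum (fls_nth f) S"
  unfolding eval_at_1_def by (rule sum.mono_neutral_left) auto

lemma eval_at_1_add: "f \<in> LQ \<Longrightarrow> g \<in> LQ \<Longrightarrow> eval_at_1 (f + g) = eval_at_1 f + eval_at_1 g"
proof -
  assume "f \<in> LQ" "g \<in> LQ"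
  define S where "S = {n. f $$ n \<noteq> 0} \<union> {n. g $$ n \<noteq> 0}"
  have "finite S"
    using \<open>f \<in> LQ\<close> \<open>g \<in> LQ\<close> by (simp add: S_def LQ_def)
  then have "eval_at_1 h = sum (fls_nth h) S" if "h \<in> {f, g, f + g}" for h
    using that by (intro eval_at_1_eq_sum) (auto simp: S_def)
  then show ?thesis
    by (simp add: sum.distrib)
qed

lemma eval_at_1_0: "eval_at_1 0 = 0"
  by (simp add: eval_at_1_def)

lemma eval_at_1_fls_monom: "eval_at_1 (fls_monom c n) = c"
  by (subst eval_at_1_eq_sum[of "{n}"]) auto

lemma eval_at_1_mult: "f \<in> LQ \<Longrightarrow> g \<in> LQ \<Longrightarrow> eval_at_1 (f * g) = eval_at_1 f * eval_at_1 g"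
  by (rule additive_on_LQ_mult[OF eval_at_1_add eval_at_1_0]) (simp_all add: eval_at_1_fls_monom)

lemma eval_at_1_lbar:
  assumes "f \<in> LQ"
  shows "eval_at_1 (lbar f) = eval_at_1 f"
proof -
  have "eval_at_1 (lbar f) = sum (fls_nth (lbar f)) (uminus ` {n. f $$ n \<noteq> 0})"
    unfolding eval_at_1_def using lbar_support[OF assms] by simp
  also have "\<dots> = sum (\<lambda>n. lbar f $$ (- n)) {n. f $$ n \<noteq> 0}"
    by (subst sum.reindex) (auto simp: inj_on_def)
  also have "\<dots> = eval_at_1 f"
    unfolding eval_at_1_def using assms by (simp add: lbar_nth)
  finally show ?thesis .
qed

lemma Phi_eq_monoms: "Phi = fls_monom 1 0 + fls_monom 1 (-1) + fls_monom 1 1"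
  unfolding Phi_def by (rule fls_eqI) simp

lemma Phi_LQ: "Phi \<in> LQ"
  unfolding Phi_eq_monoms by (intro LQ_add fls_monom_LQ)

lemma lbar_Phi: "lbar Phi = Phi"
  unfolding Phi_eq_monoms by (simp add: lbar_add LQ_add fls_monom_LQ lbar_fls_monom add_ac)

lemma eval_at_1_Phi: "eval_at_1 Phi = 3"
  unfolding Phi_eq_monoms by (simp add: eval_at_1_add LQ_add fls_monom_LQ eval_at_1_fls_monom)

lemma LQ_nth_nonzero_bounds:
  assumes "f \<in> LQ" "f $$ n \<noteq> 0"
  shows "fls_subdegree f \<le> n" "n \<le> - fls_subdegree (lbar f)"
proof -
  show "fls_subdegree f \<le> n"
    using assms(2) by (rule fls_subdegree_leI)
  have "lbar f $$ (-n) \<noteq> 0"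
    using assms by (simp add: lbar_nth)
  then have "fls_subdegree (lbar f) \<le> -n"
    by (rule fls_subdegree_leI)
  then show "n \<le> - fls_subdegree (lbar f)"
    by simp
qed

text \<open>From \<open>u v = 1\<close> the lowest degrees of \<open>u\<close> and \<open>v\<close> add up to 0, and so do those of
  \<open>lbar u\<close> and \<open>lbar v\<close>, i.e. minus the highest degrees; as lowest \<open>\<le>\<close> highest, \<open>u\<close> has a
  single degree.\<close>

lemma LQ_invertible_imp_monom:
  assumes u: "u \<in> LQ" and v: "v \<in> LQ" and uv: "u * v = 1"
  shows "\<exists>c k. c \<noteq> 0 \<and> u = fls_monom c k"
proof -
  have "u \<noteq> 0" "v \<noteq> 0"
    using uv by auto
  then have low: "fls_subdegree u + fls_subdegree v = 0"
    using fls_subdegree_mult[of u v] uv by simp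
  have "lbar u * lbar v = 1"
    using lbar_mult[OF u v] uv lbar_1 by simp
  then have high: "fls_subdegree (lbar u) + fls_subdegree (lbar v) = 0"
    using fls_subdegree_mult[of "lbar u" "lbar v"] by fastforce
  have "fls_subdegree u \<le> - fls_subdegree (lbar u)" "fls_subdegree v \<le> - fls_subdegree (lbar v)"
    using LQ_nth_nonzero_bounds[OF u nth_fls_subdegree_nonzero[OF \<open>u \<noteq> 0\<close>]]
      LQ_nth_nonzero_bounds[OF v nth_fls_subdegree_nonzero[OF \<open>v \<noteq> 0\<close>]]
    by simp_all
  then have degrees: "fls_subdegree u = - fls_subdegree (lbar u)"
    using low high by linarith
  define k where "k = fls_subdegree u"
  have "u = fls_monom (u $$ k) k"
  proof (rule fls_eqI)
    fix n
    show "u $$ n = fls_monom (u $$ k) k $$ n"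
      using LQ_nth_nonzero_bounds[OF u, of n] degrees by (cases "u $$ n = 0") (auto simp: k_def)
  qed
  moreover have "u $$ k \<noteq> 0"
    using \<open>u \<noteq> 0\<close> by (simp add: k_def)
  ultimately show ?thesis
    by blast
qed

lemma unit_in_LQ_iff: "unit_in LQ u \<longleftrightarrow> (\<exists>c k. c \<noteq> 0 \<and> u = fls_monom c k)"
proof
  show "unit_in LQ u \<Longrightarrow> \<exists>c k. c \<noteq> 0 \<and> u = fls_monom c k"
    unfolding unit_in_def using LQ_invertible_imp_monom by blast
next
  assume "\<exists>c k. c \<noteq> 0 \<and> u = fls_monom c k"
  then obtain c k where "c \<noteq> 0" "u = fls_monom c k"
    by blast
  then have "u * fls_monom (1 / c) (- k) = 1"
    by (simp add: fls_monom_1_0)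
  then show "unit_in LQ u"
    unfolding unit_in_def using \<open>u = fls_monom c k\<close> fls_monom_LQ by blast
qed

lemma unit_in_LQ_mult: "unit_in LQ u \<Longrightarrow> unit_in LQ v \<Longrightarrow> unit_in LQ (u * v)"
  by (clarsimp simp: unit_in_def LQ_mult) (metis LQ_mult mult.assoc mult.left_commute mult_1_right)

lemma unit_in_LZ_imp_signed_monom:
  assumes "unit_in LZ e"
  shows "\<exists>\<epsilon> m. (\<epsilon> = 1 \<or> \<epsilon> = -1) \<and> e = fls_monom \<epsilon> m"
proof -
  obtain v where e: "e \<in> LZ" and v: "v \<in> LZ" and ev: "e * v = 1"
    using assms by (auto simp: unit_in_def)
  then have "e \<in> LQ" "v \<in> LQ"
    by (auto simp: LZ_def)
  then obtain c m d k where c: "e = fls_monom c m" and d: "v = fls_monom d k"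
    using ev LQ_invertible_imp_monom[of e v] LQ_invertible_imp_monom[of v e] by (auto simp: mult.commute)
  have "fls_monom (c * d) (m + k) = fls_monom 1 0"
    using ev by (simp add: c d fls_monom_1_0)
  then have "c * d = 1"
    by (simp add: fls_monom_eq_iff)
  moreover have "c \<in> \<int>" "d \<in> \<int>"
    using e v by (auto simp: LZ_def c d dest: spec[of _ m] spec[of _ k])
  ultimately obtain i j where "c = of_int i" "of_int (i * j) = (1 :: rat)"
    by (auto elim!: Ints_cases)
  then have "c = 1 \<or> c = -1"
    by (auto simp: zmult_eq_1_iff simp del: of_int_mult)
  then show ?thesis
    using c by blast
qed

definition quaternion_mat :: "rat fls \<Rightarrow> rat fls \<Rightarrow> rat fls mat2" where
  "quaternion_mat g1 g2 = M2 g1 g2 (- (Phi * lbar g2)) (lbar g1)"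

lemma det2_smult2: "det2 (smult2 u M) = (u :: rat fls) ^ 2 * det2 M"
  by (cases M) (simp add: algebra_simps power2_eq_square)

lemma smult2_smult2: "smult2 u (smult2 v M) = smult2 ((u :: rat fls) * v) M"
  by (cases M) (simp add: mult.assoc)

lemma entries_in_LQ_smult2: "u \<in> LQ \<Longrightarrow> entries_in LQ M \<Longrightarrow> entries_in LQ (smult2 u M)"
  by (cases M) (simp add: LQ_mult)

lemma det2_quaternion_mat: "det2 (quaternion_mat g1 g2) = g1 * lbar g1 + Phi * (g2 * lbar g2)"
  by (simp add: quaternion_mat_def algebra_simps)

lemma lbar_det2_quaternion_mat:
  assumes "g1 \<in> LQ" "g2 \<in> LQ"
  shows "lbar (det2 (quaternion_mat g1 g2)) = det2 (quaternion_mat g1 g2)"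
  using assms
  by (simp add: det2_quaternion_mat lbar_add lbar_mult LQ_add LQ_mult lbar_LQ Phi_LQ
      lbar_lbar lbar_Phi ac_simps)

lemma eval_at_1_det2_quaternion_mat:
  assumes "g1 \<in> LQ" "g2 \<in> LQ"
  shows "eval_at_1 (det2 (quaternion_mat g1 g2)) = eval_at_1 g1 ^ 2 + 3 * eval_at_1 g2 ^ 2"
  using assms
  by (simp add: det2_quaternion_mat eval_at_1_add eval_at_1_mult LQ_add LQ_mult lbar_LQ Phi_LQ
      eval_at_1_lbar eval_at_1_Phi power2_eq_square)

lemma self_conjugate_signed_monom:
  assumes "lbar D = D" "eval_at_1 D \<ge> 0"
    and D: "D = fls_monom (\<epsilon> * s ^ 2) n" and "\<epsilon> = 1 \<or> \<epsilon> = -1" "s \<noteq> 0"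
  shows "D = fls_monom (s ^ 2) 0"
proof -
  have "\<epsilon> * s ^ 2 \<noteq> 0"
    using assms by auto
  with \<open>lbar D = D\<close> have "n = 0"
    by (simp add: D lbar_fls_monom fls_monom_eq_iff)
  moreover have "\<epsilon> = 1"
    using \<open>eval_at_1 D \<ge> 0\<close> assms(4,5) by (auto simp: D eval_at_1_fls_monom)
  ultimately show ?thesis
    by (simp add: D)
qed

lemma det2_quaternion_rep_eq_square:
  assumes "g1 \<in> LQ" "g2 \<in> LQ" "unit_in LQ u" "unit_in LQ v"
    and quat: "quaternion_mat g1 g2 = smult2 u A" and int: "smult2 v A \<in> GL2 LZ"
  shows "\<exists>s. s \<noteq> 0 \<and> det2 (quaternion_mat g1 g2) = fls_monom (s ^ 2) 0"
proof -
  define D where "D = det2 (quaternion_mat g1 g2)"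
  obtain a k b l where a: "a \<noteq> 0" "u = fls_monom a k" and b: "b \<noteq> 0" "v = fls_monom b l"
    using assms(3,4) by (auto simp: unit_in_LQ_iff)
  obtain \<epsilon> m where \<epsilon>: "\<epsilon> = 1 \<or> \<epsilon> = -1" and det_int: "det2 (smult2 v A) = fls_monom \<epsilon> m"
    using int unit_in_LZ_imp_signed_monom[of "det2 (smult2 v A)"] by (auto simp: GL2_def)
  have "D * v ^ 2 = u ^ 2 * det2 (smult2 v A)"
    by (simp add: D_def quat det2_smult2 ac_simps)
  also have "\<dots> = fls_monom (\<epsilon> * (a / b) ^ 2) (2 * k + m - 2 * l) * v ^ 2"
    unfolding det_int using b
    by (simp add: a(2) b(2) fls_monom_power2 power_divide fls_monom_eq_iff)
  finally have "D = fls_monom (\<epsilon> * (a / b) ^ 2) (2 * k + m - 2 * l)"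
    using b by simp
  moreover have "lbar D = D" "eval_at_1 D \<ge> 0"
    using assms(1,2) by (simp_all add: D_def lbar_det2_quaternion_mat eval_at_1_det2_quaternion_mat)
  ultimately have "D = fls_monom ((a / b) ^ 2) 0"
    using self_conjugate_signed_monom \<epsilon> a b by simp
  then show ?thesis
    using a b by (intro exI[of _ "a / b"]) (simp add: D_def)
qed

lemma in_U_imp_det2_1_rep:
  assumes "in_U A"
  shows "\<exists>B\<in>GL2 LQ. proj_eq A B \<and> det2 B = 1"
proof -
  obtain g1 g2 u where "g1 \<in> LQ" "g2 \<in> LQ" "unit_in LQ u"
    and quat: "quaternion_mat g1 g2 = smult2 u A"
    using assms by (auto simp: in_U_def quaternionic_def proj_eq_def quaternion_mat_def)
  moreover obtain v where "unit_in LQ v" "smult2 v A \<in> GL2 LZ"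
    using assms by (auto simp: in_U_def integral_class_def proj_eq_def)
  ultimately obtain s where "s \<noteq> 0" and det_quat: "det2 (quaternion_mat g1 g2) = fls_monom (s ^ 2) 0"
    using det2_quaternion_rep_eq_square by blast
  define w where "w = fls_monom (1 / s) 0 * u"
  have "unit_in LQ w"
    unfolding w_def using \<open>unit_in LQ u\<close> \<open>s \<noteq> 0\<close>
    by (intro unit_in_LQ_mult) (auto simp: unit_in_LQ_iff intro!: exI[of _ "1 / s"])
  have "det2 (smult2 w A) = fls_monom (1 / s) 0 ^ 2 * det2 (quaternion_mat g1 g2)"
    unfolding w_def smult2_smult2[symmetric] quat det2_smult2 ..
  also have "\<dots> = 1"
    using \<open>s \<noteq> 0\<close> by (simp add: det_quat fls_monom_power2 power_divide fls_monom_1_0)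
  finally have det_1: "det2 (smult2 w A) = 1" .
  have "entries_in LQ (smult2 w A)"
    using assms \<open>unit_in LQ w\<close> by (auto simp: in_U_def GL2_def unit_in_def intro: entries_in_LQ_smult2)
  moreover have "unit_in LQ 1"
    using fls_monom_LQ[of 1 0] by (simp add: unit_in_def fls_monom_1_0)
  ultimately have "smult2 w A \<in> GL2 LQ"
    by (simp add: GL2_def det_1)
  then show ?thesis
    using \<open>unit_in LQ w\<close> det_1 by (auto simp: proj_eq_def)
qed

theorem corollary4p10:
  shows "{A. in_U A} = {A. in_U1 A}"
  using in_U_imp_det2_1_rep by (auto simp: in_U1_def)

end
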